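(* Consider a multilayer network with $M$ layers, where layer $h\in\{1,\dots,M\}$ has $N_h$ nodes, node set $V=\{(i,h): h=1,\dots,M,\ i=1,\dots,N_h\}$, and nonnegative weights $w_{ij}(hk)$ between node $i$ of layer $h$ and node $j$ of layer $k$. Assume the network is weighted, undirected and connected, so that the multilayer Laplacian $\mathcal{L}$ (defined in the context) is symmetric: $\mathcal{L}_{(i,h),(j,k)}=\mathcal{L}_{(j,k),(i,h)}$. Let each $f_{ih}:\mathbb{R}\to\mathbb{R}$, $(i,h)\in V$, be convex (and differentiable with Lipschitz continuous derivative), let $\tilde f(Y)=\sum_{(i,h)\in V} f_{ih}(y_{ih})$ for $Y=(y_{ih})\in\mathbb{R}^V$, and consider the augmented Lagrangian $$\mathcal{L}_m(Y,\Lambda)=\tilde f(Y)+\langle \Lambda,\mathcal{L}Y\rangle+\tfrac12\langle Y,\mathcal{L}Y\rangle,\qquad Y,\Lambda\in\mathbb{R}^V,$$ associated with the problem $\min_{Y}\tilde f(Y)$ subject to $\mathcal{L}Y=0$. Let $U\in\mathbb{R}^V$ be the all-ones tensor. Then: (1) If $(Y^\star,\Lambda^\star)$ is a saddle point of $\mathcal{L}_m$ (i.e. a solution of $\min_Y\max_\Lambda\mathcal{L}_m$), then $(Y^\star,\Lambda^\star+\gamma U)$ is also a saddle (minimax) point for every $\gamma\in\mathbb{R}$. (2) If $(Y^\star,\Lambda^\star)$ is a saddle point of $\mathcal{L}_m$, then $Y^\star=x^\star U$ for some $x^\star\in\mathbb{R}$, and $x^\star$ solves the primal problem $\min_{x\in\mathbb{R}}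 \sum_{(i,h)\in V} f_{ih}(x)$. (3) There exists a saddle point $(Y^\star,\Lambda^\star)$ of $\mathcal{L}_m$ satisfying $\mathcal{L}\Lambda^\star+\nabla\tilde f(Y^\star)=0$.
   Context: For $T\in\mathbb{R}^V$, $(\mathcal{L}T)_{ih}=\sum_{k=1}^M\sum_{j=1}^{N_k} l_{ij}(hk)\,t_{jk}$, where $l_{ij}(hk)=\Big[\sum_{n=1}^M\sum_{m=1}^{N_n} w_{mi}(nh)\Big]\delta_{ij}\delta_{hk}-w_{ij}(hk)$ (the multilayer combinatorial Laplacian tensor; $\delta$ is the Kronecker delta, and $w_{ij}(hh)$ are intralayer weights, $w_{ij}(hk)$ for $h\ne k$ interlayer weights). Undirected means $w_{ij}(hk)=w_{ji}(kh)$; connected means the graph on $V$ with an edge between $(i,h)$ and $(j,k)$ whenever $w_{ij}(hk)>0$ is connected. $\langle A,B\rangle=\sum_{(i,h)\in V}a_{ih}b_{ih}$. $\nabla\tilde f(Y)$ has components $f_{ih}'(y_{ih})$. *)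

theory Defs
  imports "HOL-Analysis.Analysis"
begin

text \<open>Nodes are pairs (i,h): node i of layer h. Tensors in R^V are functions
  on nat \<times> nat (only their values on V matter). The weight w (i,h) (j,k) is
  w_ij(hk).\<close>

definition node_set :: "nat \<Rightarrow> (nat \<Rightarrow> nat) \<Rightarrow> (nat \<times> nat) set" where
  "node_set M N = {(i,h). 1 \<le> h \<and> h \<le> M \<and> 1 \<le> i \<and> i \<le> N h}"

definition ml_inner :: "(nat \<times> nat) set \<Rightarrow> (nat \<times> nat \<Rightarrow> real) \<Rightarrow> (nat \<times> nat \<Rightarrow> real) \<Rightarrow> real" where
  "ml_inner V A B = (\<Sum>p\<in>V. A p * B p)"

definition lap_entry :: "(nat \<times> nat) set \<Rightarrow> (nat \<times> nat \<Rightarrow> nat \<times> nat \<Rightarrow> real) \<Rightarrow> nat \<times> nat \<Rightarrow> nat \<times> nat \<Rightarrow> real" where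
  "lap_entry V w p q = (if p = q then (\<Sum>r\<in>V. w r p) else 0) - w p q"

definition lap_apply :: "(nat \<times> nat) set \<Rightarrow> (nat \<times> nat \<Rightarrow> nat \<times> nat \<Rightarrow> real) \<Rightarrow> (nat \<times> nat \<Rightarrow> real) \<Rightarrow> (nat \<times> nat \<Rightarrow> real)" where
  "lap_apply V w T = (\<lambda>p. \<Sum>q\<in>V. lap_entry V w p q * T q)"

definition ml_undirected :: "(nat \<times> nat) set \<Rightarrow> (nat \<times> nat \<Rightarrow> nat \<times> nat \<Rightarrow> real) \<Rightarrow> bool" where
  "ml_undirected V w \<longleftrightarrow> (\<forall>p\<in>V. \<forall>q\<in>V. w p q = w q p)"

definition ml_connected :: "(nat \<times> nat) set \<Rightarrow> (nat \<times> nat \<Rightarrow> nat \<times> nat \<Rightarrow> real) \<Rightarrow> bool" where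
  "ml_connected V w \<longleftrightarrow>
     (\<forall>p\<in>V. \<forall>q\<in>V. (\<lambda>a b. a \<in> V \<and> b \<in> V \<and> w a b > 0)\<^sup>*\<^sup>* p q)"

definition ftilde :: "(nat \<times> nat) set \<Rightarrow> (nat \<times> nat \<Rightarrow> real \<Rightarrow> real) \<Rightarrow> (nat \<times> nat \<Rightarrow> real) \<Rightarrow> real" where
  "ftilde V f Y = (\<Sum>p\<in>V. f p (Y p))"

definition aug_lag :: "(nat \<times> nat) set \<Rightarrow> (nat \<times> nat \<Rightarrow> nat \<times> nat \<Rightarrow> real) \<Rightarrow> (nat \<times> nat \<Rightarrow> real \<Rightarrow> real)
     \<Rightarrow> (nat \<times> nat \<Rightarrow> real) \<Rightarrow> (nat \<times> nat \<Rightarrow> real) \<Rightarrow> real" where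
  "aug_lag V w f Y Lam = ftilde V f Y + ml_inner V Lam (lap_apply V w Y)
      + 1/2 * ml_inner V Y (lap_apply V w Y)"

definition saddle_point :: "(nat \<times> nat) set \<Rightarrow> (nat \<times> nat \<Rightarrow> nat \<times> nat \<Rightarrow> real) \<Rightarrow> (nat \<times> nat \<Rightarrow> real \<Rightarrow> real)
     \<Rightarrow> (nat \<times> nat \<Rightarrow> real) \<Rightarrow> (nat \<times> nat \<Rightarrow> real) \<Rightarrow> bool" where
  "saddle_point V w f Ys Ls \<longleftrightarrow>
     (\<forall>Y Lam. aug_lag V w f Ys Lam \<le> aug_lag V w f Ys Ls \<and> aug_lag V w f Ys Ls \<le> aug_lag V w f Y Ls)"

end

theory Submission
  imports Defs "HOL-Library.Function_Algebras"
begin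

text \<open>The bilinear form of the Laplacian is the Dirichlet form
  \<open>\<langle>A, \<L>T\<rangle> = 1/2 \<Sum>\<^sub>p\<^sub>q w\<^sub>p\<^sub>q (A\<^sub>p - A\<^sub>q)(T\<^sub>p - T\<^sub>q)\<close>; hence \<open>\<L>\<close> is symmetric and
  positive semidefinite, and constants are orthogonal to its range, so shifting \<open>\<Lambda>\<close> by
  \<open>\<gamma>U\<close> does not change the Lagrangian. At a saddle point, maximality in \<open>\<Lambda>\<close> forces
  \<open>\<L>Y = 0\<close>, which on a connected network means \<open>Y = xU\<close>; minimality in \<open>Y\<close> then says
  that \<open>x\<close> minimises \<open>\<Sum> f\<^sub>p\<close>. Conversely, at a primal minimiser \<open>x\<close> the gradient
  \<open>\<nabla>f(xU)\<close> sums to zero, so it lies in the range of \<open>\<L>\<close>, which is the orthogonal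
  complement of the constants; this gives \<open>\<Lambda>\<close> with \<open>\<L>\<Lambda> + \<nabla>f(xU) = 0\<close>, and the
  tangent inequalities of the convex \<open>f\<^sub>p\<close> together with \<open>\<langle>Y, \<L>Y\<rangle> \<ge> 0\<close> make
  \<open>(xU, \<Lambda>)\<close> a saddle point.\<close>

lemma (in vector_space) linear_inj_on_imp_surj_on:
  assumes lin: "Vector_Spaces.linear scale scale f" and S: "subspace S"
    and B: "finite B" "S \<subseteq> span B"
    and into: "f ` S \<subseteq> S" and inj: "inj_on f S"
  shows "f ` S = S"
proof -
  interpret f: Vector_Spaces.linear scale scale f by (rule lin)
  obtain C where C: "C \<subseteq> S" "independent C" "S \<subseteq> span C"
    using basis_exists[of S] by metis
  have span_C: "span C = S" using span_subspace[OF C(1,3) S] .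
  have fin_C: "finite C" using independent_span_bound[OF B(1) C(2)] C(1) B(2) by blast
  have indep_fC: "independent (f ` C)"
    using f.independent_injective_image[OF C(2)] inj span_C by simp
  have card_fC: "card (f ` C) = card C"
    using card_image inj_on_subset[OF inj C(1)] by blast
  have "S \<subseteq> span (f ` C)"
  proof
    fix y assume y: "y \<in> S"
    show "y \<in> span (f ` C)"
    proof (rule ccontr)
      assume y_notin: "y \<notin> span (f ` C)"
      then have "independent (insert y (f ` C))" using independent_insertI indep_fC by blast
      moreover have "insert y (f ` C) \<subseteq> span C" using y into C(1) span_C by auto
      ultimately have "card (insert y (f ` C)) \<le> card C"
        using independent_span_bound[OF fin_C] by blast
      moreover have "y \<notin> f ` C" using y_notin span_base by blast
      ultimately show False using card_fC fin_C by simp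
    qed
  qed
  then have "S \<subseteq> f ` S" using f.span_image span_C by simp
  then show ?thesis using into by blast
qed

definition scale_fun :: "real \<Rightarrow> ('a \<Rightarrow> real) \<Rightarrow> 'a \<Rightarrow> real" where
  "scale_fun c T = (\<lambda>x. c * T x)"

lemma scale_fun_apply [simp]: "scale_fun c T x = c * T x"
  by (simp add: scale_fun_def)

global_interpretation real_fun: vector_space scale_fun
  by unfold_locales (auto simp: fun_eq_iff algebra_simps)

lemma sum_fun_apply: "(\<Sum>q\<in>A. F q) x = (\<Sum>q\<in>A. F q x)"
  by (induction A rule: infinite_finite_induct) simp_all

lemma finite_node_set: "finite (node_set M N)"
proof (rule finite_subset)
  show "node_set M N \<subseteq> (\<Union>h\<le>M. {..N h} \<times> {h})"
    by (auto simp: node_set_def)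
qed simp

locale ml_network =
  fixes V :: "(nat \<times> nat) set" and w :: "nat \<times> nat \<Rightarrow> nat \<times> nat \<Rightarrow> real"
  assumes finite_nodes: "finite V"
    and undirected: "ml_undirected V w"
    and weights_nonneg: "\<And>p q. p \<in> V \<Longrightarrow> q \<in> V \<Longrightarrow> 0 \<le> w p q"
begin

lemma lap_apply_eq:
  assumes "p \<in> V"
  shows "lap_apply V w T p = (\<Sum>q\<in>V. w p q * (T p - T q))"
proof -
  have "lap_apply V w T p
      = (\<Sum>q\<in>V. (if p = q then (\<Sum>r\<in>V. w r p) * T q else 0) - w p q * T q)"
    unfolding lap_apply_def lap_entry_def by (intro sum.cong) (auto simp: left_diff_distrib)
  also have "\<dots> = (\<Sum>r\<in>V. w r p) * T p - (\<Sum>q\<in>V. w p q * T q)"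
    using assms finite_nodes by (simp add: sum_subtractf)
  also have "(\<Sum>r\<in>V. w r p) = (\<Sum>q\<in>V. w p q)"
    using assms undirected by (intro sum.cong) (auto simp: ml_undirected_def)
  finally show ?thesis
    by (simp add: right_diff_distrib sum_subtractf sum_distrib_left mult_ac)
qed

lemma lap_apply_const: "p \<in> V \<Longrightarrow> lap_apply V w (\<lambda>_. c) p = 0"
  by (simp add: lap_apply_eq)

lemma ml_inner_lap_apply_dirichlet:
  "ml_inner V A (lap_apply V w T) = (\<Sum>p\<in>V. \<Sum>q\<in>V. w p q * (A p - A q) * (T p - T q)) / 2"
proof -
  define D where "D = (\<Sum>p\<in>V. \<Sum>q\<in>V. w p q * A p * (T p - T q))"
  have inner: "ml_inner V A (lap_apply V w T) = D"
    by (simp add: D_def ml_inner_def lap_apply_eq sum_distrib_left mult_ac)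
  have "D = (\<Sum>q\<in>V. \<Sum>p\<in>V. w p q * A p * (T p - T q))"
    unfolding D_def by (rule sum.swap)
  also have "\<dots> = (\<Sum>p\<in>V. \<Sum>q\<in>V. w p q * A q * (T q - T p))"
    using undirected by (intro sum.cong refl) (auto simp: ml_undirected_def)
  finally have "D + D = (\<Sum>p\<in>V. \<Sum>q\<in>V. w p q * A p * (T p - T q) + w p q * A q * (T q - T p))"
    by (simp add: D_def sum.distrib)
  also have "\<dots> = (\<Sum>p\<in>V. \<Sum>q\<in>V. w p q * (A p - A q) * (T p - T q))"
    by (intro sum.cong refl) (simp add: algebra_simps)
  finally show ?thesis using inner by simp
qed

lemma ml_inner_lap_apply_commute:
  "ml_inner V A (lap_apply V w T) = ml_inner V T (lap_apply V w A)"
  by (simp add: ml_inner_lap_apply_dirichlet mult_ac)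

lemma ml_inner_const_lap_apply: "ml_inner V (\<lambda>_. c) (lap_apply V w T) = 0"
  by (simp add: ml_inner_lap_apply_dirichlet)

lemma ml_inner_lap_apply_self_nonneg: "0 \<le> ml_inner V T (lap_apply V w T)"
  unfolding ml_inner_lap_apply_dirichlet
  by (intro divide_nonneg_pos sum_nonneg) (simp_all add: weights_nonneg mult.assoc)

lemma lap_apply_eq_0_imp_const:
  assumes conn: "ml_connected V w" and ker: "\<forall>p\<in>V. lap_apply V w T p = 0"
    and "p \<in> V" "q \<in> V"
  shows "T p = T q"
proof -
  let ?e = "\<lambda>p q. w p q * (T p - T q) * (T p - T q)"
  have e_nonneg: "0 \<le> ?e p q" if "p \<in> V" "q \<in> V" for p q
    using weights_nonneg[OF that] by (simp add: mult.assoc)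
  have "(\<Sum>p\<in>V. \<Sum>q\<in>V. ?e p q) = 0"
    using ml_inner_lap_apply_dirichlet[of T T] ker by (simp add: ml_inner_def)
  then have "\<forall>p\<in>V. (\<Sum>q\<in>V. ?e p q) = 0"
    using finite_nodes e_nonneg by (subst (asm) sum_nonneg_eq_0_iff) (auto intro: sum_nonneg)
  then have e_0: "?e a b = 0" if "a \<in> V" "b \<in> V" for a b
    using that finite_nodes e_nonneg by (simp add: sum_nonneg_eq_0_iff)
  have edge: "T a = T b" if "a \<in> V" "b \<in> V" "0 < w a b" for a b
    using e_0[OF that(1,2)] that(3) by simp
  have "(\<lambda>a b. a \<in> V \<and> b \<in> V \<and> 0 < w a b)\<^sup>*\<^sup>* p q"
    using conn \<open>p \<in> V\<close> \<open>q \<in> V\<close> by (simp add: ml_connected_def)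
  then show ?thesis
    by (induction rule: rtranclp_induct) (auto dest: edge)
qed

text \<open>The Laplacian maps the finite-dimensional space \<open>S\<close> of sum-zero tensors supported
  on \<open>V\<close> into itself, injectively because its kernel on \<open>V\<close> consists of the constants;
  hence it maps \<open>S\<close> onto \<open>S\<close>.\<close>
lemma lap_apply_solvable:
  assumes conn: "ml_connected V w" and sum_g: "(\<Sum>p\<in>V. g p) = 0"
  shows "\<exists>Lam. \<forall>p\<in>V. lap_apply V w Lam p = g p"
proof -
  define L where "L T = (\<lambda>p. if p \<in> V then lap_apply V w T p else 0)" for T
  define S where "S = {T :: nat \<times> nat \<Rightarrow> real. (\<forall>p. p \<notin> V \<longrightarrow> T p = 0) \<and> (\<Sum>p\<in>V. T p) = 0}"
  define B where "B = (\<lambda>q p. if p = q then 1 else 0 :: real) ` V"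
  have lin: "Vector_Spaces.linear scale_fun scale_fun L"
    by unfold_locales
      (auto simp: fun_eq_iff L_def lap_apply_def sum.distrib sum_distrib_left algebra_simps)
  then interpret L: Vector_Spaces.linear scale_fun scale_fun L .
  have subspace: "real_fun.subspace S"
    by (auto simp: real_fun.subspace_def S_def sum.distrib sum_distrib_left[symmetric])
  have finite_B: "finite B" using finite_nodes by (simp add: B_def)
  have span: "S \<subseteq> real_fun.span B"
  proof
    fix T assume T: "T \<in> S"
    have "T = (\<Sum>q\<in>V. scale_fun (T q) (\<lambda>p. if p = q then 1 else 0))"
      using T finite_nodes by (auto simp: fun_eq_iff sum_fun_apply S_def if_distrib cong: if_cong)
    also have "\<dots> \<in> real_fun.span B"
      by (intro real_fun.span_sum real_fun.span_scale real_fun.span_base) (auto simp: B_def)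
    finally show "T \<in> real_fun.span B" .
  qed
  have into: "L ` S \<subseteq> S"
    using ml_inner_const_lap_apply[of 1] by (auto simp: S_def L_def ml_inner_def)
  have inj: "inj_on L S"
  proof (subst L.inj_on_iff_eq_0[OF subspace], intro ballI impI)
    fix T assume T: "T \<in> S" and "L T = 0"
    then have "\<forall>p\<in>V. lap_apply V w T p = 0"
      by (metis L_def zero_fun_def)
    then have const: "T q = T p" if "p \<in> V" "q \<in> V" for p q
      using lap_apply_eq_0_imp_const[OF conn] that by blast
    have "T p = 0" if p: "p \<in> V" for p
    proof -
      have "real (card V) * T p = (\<Sum>q\<in>V. T q)" using const[OF p] by simp
      also have "\<dots> = 0" using T by (simp add: S_def)
      finally show ?thesis using p finite_nodes by (auto simp: card_gt_0_iff)
    qed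
    then show "T = 0" using T by (auto simp: S_def fun_eq_iff)
  qed
  have "(\<lambda>p. if p \<in> V then g p else 0) \<in> L ` S"
    using real_fun.linear_inj_on_imp_surj_on[OF lin subspace finite_B span into inj] sum_g
    by (auto simp: S_def)
  then obtain Lam where Lam: "(\<lambda>p. if p \<in> V then g p else 0) = L Lam" by blast
  have "lap_apply V w Lam p = g p" if "p \<in> V" for p
    using fun_cong[OF Lam, of p] that by (simp add: L_def)
  then show ?thesis by blast
qed

lemma aug_lag_shift: "aug_lag V w f Y (\<lambda>p. Lam p + \<gamma>) = aug_lag V w f Y Lam"
  using ml_inner_const_lap_apply[of \<gamma> Y]
  by (simp add: aug_lag_def ml_inner_def distrib_right sum.distrib)

lemma aug_lag_feasible:
  "\<forall>p\<in>V. lap_apply V w Y p = 0 \<Longrightarrow> aug_lag V w f Y Lam = ftilde V f Y"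
  by (simp add: aug_lag_def ml_inner_def)

text \<open>Replacing \<open>Ls\<close> by \<open>Ls + \<L>Ys\<close> raises the Lagrangian by \<open>\<langle>\<L>Ys, \<L>Ys\<rangle>\<close>.\<close>
lemma saddle_point_feasible:
  assumes "saddle_point V w f Ys Ls"
  shows "\<forall>p\<in>V. lap_apply V w Ys p = 0"
proof -
  let ?X = "lap_apply V w Ys"
  have "aug_lag V w f Ys (\<lambda>p. Ls p + ?X p) \<le> aug_lag V w f Ys Ls"
    using assms by (simp add: saddle_point_def)
  then have "(\<Sum>p\<in>V. ?X p * ?X p) \<le> 0"
    by (simp add: aug_lag_def ml_inner_def distrib_right sum.distrib)
  then have "(\<Sum>p\<in>V. ?X p * ?X p) = 0"
    by (simp add: antisym sum_nonneg)
  then show ?thesis using finite_nodes by (simp add: sum_nonneg_eq_0_iff)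
qed

lemma saddle_point_consensus:
  assumes conn: "ml_connected V w" and saddle: "saddle_point V w f Ys Ls"
  shows "\<exists>x. (\<forall>p\<in>V. Ys p = x) \<and> (\<forall>z. (\<Sum>p\<in>V. f p x) \<le> (\<Sum>p\<in>V. f p z))"
proof (cases "V = {}")
  case False
  then obtain p0 where p0: "p0 \<in> V" by blast
  have feasible: "\<forall>p\<in>V. lap_apply V w Ys p = 0"
    using saddle_point_feasible[OF saddle] .
  then have consensus: "\<forall>p\<in>V. Ys p = Ys p0"
    using lap_apply_eq_0_imp_const[OF conn] p0 by blast
  have "(\<Sum>p\<in>V. f p (Ys p0)) \<le> (\<Sum>p\<in>V. f p z)" for z
  proof -
    have "(\<Sum>p\<in>V. f p (Ys p0)) = aug_lag V w f Ys Ls"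
      using aug_lag_feasible[OF feasible] consensus by (simp add: ftilde_def)
    also have "\<dots> \<le> aug_lag V w f (\<lambda>_. z) Ls"
      using saddle by (simp add: saddle_point_def)
    also have "\<dots> = (\<Sum>p\<in>V. f p z)"
      using aug_lag_feasible lap_apply_const by (simp add: ftilde_def)
    finally show ?thesis .
  qed
  then show ?thesis using consensus by blast
qed simp

lemma saddle_point_if_stationary:
  assumes cvx: "\<forall>p\<in>V. convex_on UNIV (f p)"
    and deriv: "\<forall>p\<in>V. (f p has_real_derivative f' p x) (at x)"
    and stationary: "\<forall>p\<in>V. lap_apply V w Ls p + f' p x = 0"
  shows "saddle_point V w f (\<lambda>_. x) Ls"
  unfolding saddle_point_def
proof (intro allI conjI)
  fix Y Lam
  have feasible: "\<forall>p\<in>V. lap_apply V w (\<lambda>_. x) p = 0"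
    using lap_apply_const by blast
  show "aug_lag V w f (\<lambda>_. x) Lam \<le> aug_lag V w f (\<lambda>_. x) Ls"
    using aug_lag_feasible[OF feasible] by simp
  have tangent: "f' p x * (Y p - x) \<le> f p (Y p) - f p x" if "p \<in> V" for p
    using convex_on_imp_above_tangent[of UNIV "f p" x "Y p" "f' p x"] cvx deriv that by simp
  have Ls_eq: "lap_apply V w Ls p = - f' p x" if "p \<in> V" for p
    using stationary that by (simp add: eq_neg_iff_add_eq_0)
  have "(\<Sum>p\<in>V. f' p x) = - (\<Sum>p\<in>V. lap_apply V w Ls p)"
    unfolding sum_negf[symmetric] by (intro sum.cong refl) (simp add: Ls_eq)
  also have "\<dots> = 0"
    using ml_inner_const_lap_apply[of 1 Ls] by (simp add: ml_inner_def)
  finally have sum_deriv: "(\<Sum>p\<in>V. f' p x) = 0" .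
  have "- ml_inner V Ls (lap_apply V w Y) = - ml_inner V Y (lap_apply V w Ls)"
    by (simp add: ml_inner_lap_apply_commute)
  also have "\<dots> = (\<Sum>p\<in>V. f' p x * Y p)"
    unfolding ml_inner_def sum_negf[symmetric] by (intro sum.cong refl) (simp add: Ls_eq)
  also have "\<dots> = (\<Sum>p\<in>V. f' p x * (Y p - x))"
    using sum_deriv by (simp add: right_diff_distrib sum_subtractf sum_distrib_right[symmetric])
  also have "\<dots> \<le> ftilde V f Y - ftilde V f (\<lambda>_. x)"
    unfolding ftilde_def sum_subtractf[symmetric] by (intro sum_mono tangent)
  finally show "aug_lag V w f (\<lambda>_. x) Ls \<le> aug_lag V w f Y Ls"
    using aug_lag_feasible[OF feasible, of f Ls] ml_inner_lap_apply_self_nonneg[of Y]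
    by (simp add: aug_lag_def)
qed

lemma saddle_point_exists:
  assumes conn: "ml_connected V w"
    and cvx: "\<forall>p\<in>V. convex_on UNIV (f p)"
    and deriv: "\<forall>p\<in>V. \<forall>x. (f p has_real_derivative f' p x) (at x)"
    and minimiser: "\<forall>z. (\<Sum>p\<in>V. f p x) \<le> (\<Sum>p\<in>V. f p z)"
  shows "\<exists>Ys Ls. saddle_point V w f Ys Ls \<and> (\<forall>p\<in>V. lap_apply V w Ls p + f' p (Ys p) = 0)"
proof -
  have "((\<lambda>z. \<Sum>p\<in>V. f p z) has_real_derivative (\<Sum>p\<in>V. f' p x)) (at x)"
    using deriv by (intro DERIV_sum) blast
  then have "(\<Sum>p\<in>V. f' p x) = 0"
    by (rule DERIV_local_min[where d = 1]) (use minimiser in auto)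
  then obtain Ls where "\<forall>p\<in>V. lap_apply V w Ls p = - f' p x"
    using lap_apply_solvable[OF conn, of "\<lambda>p. - f' p x"] by (auto simp: sum_negf)
  then have "\<forall>p\<in>V. lap_apply V w Ls p + f' p x = 0" by simp
  then show ?thesis
    using saddle_point_if_stationary[OF cvx] deriv by blast
qed

end

theorem lemma1:
  fixes M :: nat and N :: "nat \<Rightarrow> nat"
    and w :: "nat \<times> nat \<Rightarrow> nat \<times> nat \<Rightarrow> real"
    and f f' :: "nat \<times> nat \<Rightarrow> real \<Rightarrow> real"
  defines "V \<equiv> node_set M N"
  assumes nonneg: "\<forall>p\<in>V. \<forall>q\<in>V. w p q \<ge> 0"
    and undir: "ml_undirected V w"
    and conn: "ml_connected V w"
    and cvx: "\<forall>p\<in>V. convex_on UNIV (f p)"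
    and deriv: "\<forall>p\<in>V. \<forall>x. (f p has_real_derivative f' p x) (at x)"
    and lip: "\<forall>p\<in>V. \<exists>C. lipschitz_on C UNIV (f' p)"
    and primal_solvable: "\<exists>x. \<forall>z. (\<Sum>p\<in>V. f p x) \<le> (\<Sum>p\<in>V. f p z)"
  shows "(\<forall>Ys Ls. saddle_point V w f Ys Ls \<longrightarrow>
            (\<forall>\<gamma>::real. saddle_point V w f Ys (\<lambda>p. Ls p + \<gamma>)))
       \<and> (\<forall>Ys Ls. saddle_point V w f Ys Ls \<longrightarrow>
            (\<exists>xs. (\<forall>p\<in>V. Ys p = xs) \<and> (\<forall>z. (\<Sum>p\<in>V. f p xs) \<le> (\<Sum>p\<in>V. f p z))))
       \<and> (\<exists>Ys Ls. saddle_point V w f Ys Ls \<and>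
            (\<forall>p\<in>V. lap_apply V w Ls p + f' p (Ys p) = 0))"
  \<comment> \<open>\<open>lip\<close> is only needed for the convergence of the paper's algorithm, not here.\<close>
proof -
  interpret ml_network V w
    using finite_node_set nonneg undir unfolding V_def by unfold_locales auto
  have "saddle_point V w f Ys (\<lambda>p. Ls p + \<gamma>)" if "saddle_point V w f Ys Ls" for Ys Ls \<gamma>
    using that by (simp add: saddle_point_def aug_lag_shift)
  moreover obtain x where "\<forall>z. (\<Sum>p\<in>V. f p x) \<le> (\<Sum>p\<in>V. f p z)"
    using primal_solvable by blast
  ultimately show ?thesis
    using saddle_point_consensus[OF conn] saddle_point_exists[OF conn cvx deriv] by blast
qed

end
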